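(* Let $m$ be a non-zero integer and $n$ any integer. Then \[ 25\sum_{k = 1}^n F_{mk}^{\,4} = \frac{F_{2mn+m}\left(L_{2mn + m} + 4( - 1)^{mn - 1} L_m \right)}{F_{2m}} + 6n+3\,. \]
   Context: $F_i$ and $L_i$ denote the Fibonacci and Lucas numbers, defined for all $i\in\mathbb{Z}$ by $F_i=F_{i-1}+F_{i-2}$, $F_0=0$, $F_1=1$, and $L_i=L_{i-1}+L_{i-2}$, $L_0=2$, $L_1=1$; equivalently $F_{-i}=(-1)^{i-1}F_i$ and $L_{-i}=(-1)^iL_i$. Summation convention for an arbitrary integer upper limit: $\sum_{k=a}^{a-1} f(k)=0$, and for $n<a-1$, $\sum_{k=a}^{n} f(k) = -\sum_{k=n+1}^{a-1} f(k)$. *)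

theory Defs
  imports Complex_Main
begin

fun fibn :: "nat \<Rightarrow> int" where
  "fibn 0 = 0"
| "fibn (Suc 0) = 1"
| "fibn (Suc (Suc n)) = fibn (Suc n) + fibn n"

fun lucn :: "nat \<Rightarrow> int" where
  "lucn 0 = 2"
| "lucn (Suc 0) = 1"
| "lucn (Suc (Suc n)) = lucn (Suc n) + lucn n"

definition F :: "int \<Rightarrow> int" where
  "F i = (if i \<ge> 0 then fibn (nat i) else (-1) ^ (nat (-i) - 1) * fibn (nat (-i)))"

definition L :: "int \<Rightarrow> int" where
  "L i = (if i \<ge> 0 then lucn (nat i) else (-1) ^ nat (-i) * lucn (nat (-i)))"

definition gsum :: "(int \<Rightarrow> 'a::ab_group_add) \<Rightarrow> int \<Rightarrow> int \<Rightarrow> 'a" where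
  "gsum f a n = (if n \<ge> a - 1 then sum f {a..n} else - sum f {n+1..a-1})"

end

theory Submission
  imports Defs
begin

text \<open>Binet's formulas F i = (\<phi>^i - \<psi>^i)/\<surd>5 and L i = \<phi>^i + \<psi>^i hold for all integers i.
  Since \<phi>\<psi> = -1, the right-hand side R n of the identity satisfies
  R n - R (n - 1) = 25 F (m n)^4: in terms of a = \<phi>^m, b = \<psi>^m, A = \<phi>^(mn), B = \<psi>^(mn)
  this is a polynomial identity modulo (ab)^2 = (AB)^2 = 1, because passing from n to n - 1
  replaces a, b by their inverses. Moreover R 0 = 0 as F (2m) = F m L m, so the identity
  follows by telescoping, for negative n as well.\<close>

definition phi :: real where "phi = (1 + sqrt 5) / 2"
definition psi :: real where "psi = (1 - sqrt 5) / 2"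

lemma phi_times_psi: "phi * psi = -1"
  unfolding phi_def psi_def by (simp add: field_simps)

lemma phi_plus_psi: "phi + psi = 1"
  unfolding phi_def psi_def by (simp add: field_simps)

lemma phi_minus_psi: "phi - psi = sqrt 5"
  unfolding phi_def psi_def by (simp add: field_simps)

lemma phi_squared: "phi ^ 2 = phi + 1"
  unfolding phi_def by (simp add: field_simps power2_eq_square)

lemma psi_squared: "psi ^ 2 = psi + 1"
  unfolding psi_def by (simp add: field_simps power2_eq_square)

lemma power_Suc_Suc_of_square_eq:
  fixes x :: "'a::comm_semiring_1"
  assumes "x ^ 2 = x + 1"
  shows "x ^ Suc (Suc n) = x ^ Suc n + x ^ n"
proof -
  have "x ^ Suc (Suc n) = x ^ n * x ^ 2" by (metis add_2_eq_Suc' power_add)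
  then show ?thesis by (simp add: assms algebra_simps)
qed

lemma fibn_binet: "real_of_int (fibn n) = (phi ^ n - psi ^ n) / sqrt 5"
proof (induction n rule: fibn.induct)
  case (3 n)
  have "real_of_int (fibn (Suc (Suc n))) = real_of_int (fibn (Suc n)) + real_of_int (fibn n)"
    by simp
  then show ?case
    unfolding 3 power_Suc_Suc_of_square_eq[OF phi_squared] power_Suc_Suc_of_square_eq[OF psi_squared]
    by (simp add: add_divide_distrib diff_divide_distrib)
qed (simp_all add: phi_minus_psi)

lemma lucn_binet: "real_of_int (lucn n) = phi ^ n + psi ^ n"
proof (induction n rule: lucn.induct)
  case (3 n)
  have "real_of_int (lucn (Suc (Suc n))) = real_of_int (lucn (Suc n)) + real_of_int (lucn n)"
    by simp
  then show ?case
    unfolding 3 power_Suc_Suc_of_square_eq[OF phi_squared] power_Suc_Suc_of_square_eq[OF psi_squared]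
    by simp
qed (simp_all add: phi_plus_psi)

lemma power_int_minus_of_mult_eq_minus_one:
  fixes x y :: "'a::field"
  assumes "x * y = -1"
  shows "x powi (- int k) = (- y) ^ k"
proof -
  have "inverse x = - y" using assms by (simp add: inverse_unique)
  then show ?thesis by (simp add: power_int_minus flip: power_inverse)
qed

lemma power_int_double: "(z::'a::division_ring) powi (2 * k) = (z powi k) ^ 2"
  by (simp only: mult.commute[of 2 k] power_int_mult power_int_numeral)

lemma power_int_minus_one_squared: "((-1::'a::division_ring) powi k) ^ 2 = 1"
  by (simp add: power_int_power' mult.commute[of k] power_int_mult)

lemma power_int_odd_multiple:
  fixes z :: "'a::field"
  assumes "z \<noteq> 0"
  shows "z powi (2*m*n + m) = z powi m * (z powi (m*n))^2"
    and "z powi (2*m*(n - 1) + m) = (z powi (m*n))^2 / z powi m"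
proof -
  have "z powi (2*m*n + m) = z powi (m + m*n*2)" by (simp add: algebra_simps)
  then show "z powi (2*m*n + m) = z powi m * (z powi (m*n))^2"
    by (simp only: power_int_add[OF disjI1[OF assms]] power_int_mult power_int_numeral)
  have "z powi (2*m*(n - 1) + m) = z powi (m*n*2 - m)" by (simp add: algebra_simps)
  then show "z powi (2*m*(n - 1) + m) = (z powi (m*n))^2 / z powi m"
    by (simp only: power_int_diff[OF disjI1[OF assms]] power_int_mult power_int_numeral)
qed

lemma phi_psi_power_int_minus:
  "phi powi (- int k) = (- psi) ^ k" "psi powi (- int k) = (- phi) ^ k"
  using phi_times_psi
  by (simp_all add: power_int_minus_of_mult_eq_minus_one mult.commute[of psi phi])

lemma F_binet: "real_of_int (F i) = (phi powi i - psi powi i) / sqrt 5"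
proof (cases i)
  case (nonneg k)
  then show ?thesis by (simp add: F_def fibn_binet)
next
  case (neg k)
  then have "\<not> 0 \<le> i" "nat (- i) = Suc k" by simp_all
  then have "real_of_int (F i) = (-1) ^ k * ((phi ^ Suc k - psi ^ Suc k) / sqrt 5)"
    by (simp add: F_def fibn_binet del: power_Suc)
  also have "\<dots> = ((- psi) ^ Suc k - (- phi) ^ Suc k) / sqrt 5"
    by (simp add: power_minus[of psi] power_minus[of phi] right_diff_distrib)
  finally show ?thesis using neg by (simp only: phi_psi_power_int_minus)
qed

lemma L_binet: "real_of_int (L i) = phi powi i + psi powi i"
proof (cases i)
  case (nonneg k)
  then show ?thesis by (simp add: L_def lucn_binet)
next
  case (neg k)
  then have "\<not> 0 \<le> i" "nat (- i) = Suc k" by simp_all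
  then have "real_of_int (L i) = (-1) ^ Suc k * (phi ^ Suc k + psi ^ Suc k)"
    by (simp add: L_def lucn_binet del: power_Suc)
  also have "\<dots> = (- psi) ^ Suc k + (- phi) ^ Suc k"
    by (simp only: power_minus[of psi] power_minus[of phi] distrib_left add.commute)
  finally show ?thesis using neg by (simp only: phi_psi_power_int_minus)
qed

lemma fibn_pos: "0 < n \<Longrightarrow> 0 < fibn n"
proof (induction n rule: fibn.induct)
  case (3 n)
  moreover have "0 \<le> fibn n" by (induction n rule: fibn.induct) simp_all
  ultimately show ?case by (cases n) simp_all
qed simp_all

lemma F_nonzero: "i \<noteq> 0 \<Longrightarrow> F i \<noteq> 0"
  using fibn_pos[of "nat i"] fibn_pos[of "nat (- i)"] by (auto simp: F_def)

lemma F_double: "F (2 * i) = F i * L i"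
proof -
  have "real_of_int (F (2 * i)) = real_of_int (F i * L i)"
    unfolding of_int_mult F_binet L_binet power_int_double by (simp add: power2_eq_square algebra_simps)
  then show ?thesis by (simp only: of_int_eq_iff)
qed

lemma gsum_last: "gsum f a n = gsum f a (n - 1) + f n"
proof -
  consider "a \<le> n" | "n = a - 1" | "n < a - 1" by linarith
  then show ?thesis
  proof cases
    case 1
    then have "{a..n} = insert n {a..n - 1}" by auto
    with 1 show ?thesis by (simp add: gsum_def)
  next
    case 2
    then show ?thesis by (simp add: gsum_def)
  next
    case 3
    then have "{n..a - 1} = insert n {n + 1..a - 1}" by auto
    with 3 show ?thesis by (simp add: gsum_def)
  qed
qed

lemma gsum_telescope:
  fixes f g :: "int \<Rightarrow> 'a::ab_group_add"
  assumes "\<And>k. g k - g (k - 1) = f k"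
  shows "gsum f a n = g n - g (a - 1)"
proof (induction n rule: int_induct[where k = "a - 1"])
  case base
  show ?case by (simp add: gsum_def)
next
  case (step1 i)
  then show ?case using gsum_last[of f a "i + 1"] assms[of "i + 1"] by (simp add: algebra_simps)
next
  case (step2 i)
  then show ?case using gsum_last[of f a i] assms[of i] by (simp add: algebra_simps)
qed

text \<open>With a = x^m, b = y^m, A = x^(mn), B = y^(mn) and x y = -1, the two products are the
  numerators of the closed form at n and at n - 1.\<close>

lemma quartic_telescoping_identity:
  fixes a b A B :: "'a::field"
  assumes ab: "(a*b)^2 = 1" and AB: "(A*B)^2 = 1"
  shows "(a*A^2 - b*B^2) * (a*A^2 + b*B^2 - 4*(A*B)*(a+b))
         - (A^2/a - B^2/b) * (A^2/a + B^2/b - 4*(A*B)*(1/a + 1/b))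
         + 6*(a^2 - b^2) = (A - B)^4 * (a^2 - b^2)"
proof -
  have "a \<noteq> 0" "b \<noteq> 0" using ab by auto
  then have div_a: "x/a = x*((a*b)*b)" and div_b: "x/b = x*((a*b)*a)" for x
    using ab by (simp_all add: field_simps power2_eq_square)
  have "(A^2/a - B^2/b) * (A^2/a + B^2/b - 4*(A*B)*(1/a + 1/b))
      = (a*b)^2 * ((b*A^2 - a*B^2) * (b*A^2 + a*B^2 - 4*(A*B)*(a+b)))"
    unfolding div_a div_b by (simp add: algebra_simps power2_eq_square)
  also have "\<dots> = (b*A^2 - a*B^2) * (b*A^2 + a*B^2 - 4*(A*B)*(a+b))"
    using ab by simp
  finally have difference: "(a*A^2 - b*B^2) * (a*A^2 + b*B^2 - 4*(A*B)*(a+b))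
         - (A^2/a - B^2/b) * (A^2/a + B^2/b - 4*(A*B)*(1/a + 1/b))
       = (a^2 - b^2) * (A^4 + B^4 - 4*(A*B)*(A^2 + B^2))"
    by (simp add: algebra_simps power2_eq_square power4_eq_xxxx)
  have fourth_power: "A^4 + B^4 - 4*(A*B)*(A^2 + B^2) + 6 = (A - B)^4"
    using AB by (simp add: algebra_simps power2_eq_square power4_eq_xxxx)
  show ?thesis unfolding difference by (simp flip: fourth_power add: algebra_simps)
qed

lemma conjugate_powers_quartic_step:
  fixes x y :: "'a::field" and m n :: int
  assumes xy: "x * y = -1"
  defines "P j \<equiv> (x powi (2*m*j + m) - y powi (2*m*j + m)) *
      (x powi (2*m*j + m) + y powi (2*m*j + m) + 4 * (-1) powi (m*j - 1) * (x powi m + y powi m))"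
  shows "P n - P (n - 1) + 6 * (x powi (2*m) - y powi (2*m)) =
    (x powi (m*n) - y powi (m*n)) ^ 4 * (x powi (2*m) - y powi (2*m))"
proof -
  have "x \<noteq> 0" "y \<noteq> 0" using xy by auto
  have sign: "(-1) powi k = x powi k * y powi k" for k
    by (simp flip: xy power_int_mult_distrib)
  define a where "a = x powi m"
  define b where "b = y powi m"
  define A where "A = x powi (m*n)"
  define B where "B = y powi (m*n)"
  have "a \<noteq> 0" "b \<noteq> 0" using \<open>x \<noteq> 0\<close> \<open>y \<noteq> 0\<close> by (simp_all add: a_def b_def)
  have sign_n: "(-1) powi (m*n - 1) = - (A * B)"
    using power_int_diff[of "-1::'a" "m*n" 1] by (simp add: sign[of "m*n"] A_def B_def)
  have "(-1::'a) powi (m*(n - 1) - 1) = (-1) powi ((m*n - 1) - m)"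
    by (simp add: algebra_simps)
  also have "\<dots> = (-1) powi (m*n - 1) / (-1) powi m"
    by (simp add: power_int_diff)
  finally have sign_pred_quotient:
    "(-1::'a) powi (m*(n - 1) - 1) = (-1) powi (m*n - 1) / (-1) powi m" .
  have sign_pred: "(-1) powi (m*(n - 1) - 1) * (a + b) = - (A * B) * (1/a + 1/b)"
    unfolding sign_pred_quotient sign_n sign[of m] a_def[symmetric] b_def[symmetric]
    using \<open>a \<noteq> 0\<close> \<open>b \<noteq> 0\<close> by (simp add: field_simps)
  have "P n = (a*A^2 - b*B^2) * (a*A^2 + b*B^2 - 4*(A*B)*(a+b))"
    unfolding P_def power_int_odd_multiple(1)[OF \<open>x \<noteq> 0\<close>]
      power_int_odd_multiple(1)[OF \<open>y \<noteq> 0\<close>] sign_n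
    by (simp add: a_def b_def A_def B_def)
  moreover have "P (n - 1) = (A^2/a - B^2/b) * (A^2/a + B^2/b - 4*(A*B)*(1/a + 1/b))"
    unfolding P_def power_int_odd_multiple(2)[OF \<open>x \<noteq> 0\<close>]
      power_int_odd_multiple(2)[OF \<open>y \<noteq> 0\<close>] mult.assoc[of 4]
      a_def[symmetric] b_def[symmetric] A_def[symmetric] B_def[symmetric]
    by (simp add: sign_pred)
  moreover have "x powi (2*m) - y powi (2*m) = a^2 - b^2"
    by (simp add: power_int_double a_def b_def)
  moreover have "(a*b)^2 = 1" "(A*B)^2 = 1"
    using power_int_minus_one_squared[where 'a = 'a, of m]
      power_int_minus_one_squared[where 'a = 'a, of "m*n"]
    by (simp_all add: sign a_def b_def A_def B_def)
  ultimately show ?thesis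
    using quartic_telescoping_identity by (simp flip: A_def B_def)
qed

definition quartic_rhs :: "int \<Rightarrow> int \<Rightarrow> real" where
  "quartic_rhs m n = real_of_int (F (2*m*n + m)) *
      (real_of_int (L (2*m*n + m)) + 4 * (-1) powi (m*n - 1) * real_of_int (L m))
      / real_of_int (F (2*m)) + 6 * real_of_int n + 3"

lemma quartic_rhs_diff:
  assumes "m \<noteq> 0"
  shows "quartic_rhs m n - quartic_rhs m (n - 1) = 25 * real_of_int (F (m*n)) ^ 4"
proof -
  define D where "D = phi powi (2*m) - psi powi (2*m)"
  define P where "P j = (phi powi (2*m*j + m) - psi powi (2*m*j + m)) *
      (phi powi (2*m*j + m) + psi powi (2*m*j + m) + 4 * (-1) powi (m*j - 1) * (phi powi m + psi powi m))"
    for j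
  have "D \<noteq> 0" using F_nonzero[of "2*m"] F_binet[of "2*m"] assms by (auto simp: D_def)
  have rhs: "quartic_rhs m j = P j / D + 6 * j + 3" for j
    by (simp add: quartic_rhs_def P_def D_def F_binet L_binet)
  have "quartic_rhs m n - quartic_rhs m (n - 1) = (P n - P (n - 1) + 6 * D) / D"
    using \<open>D \<noteq> 0\<close> by (simp add: rhs field_simps)
  also have "\<dots> = (phi powi (m*n) - psi powi (m*n)) ^ 4"
    using conjugate_powers_quartic_step[OF phi_times_psi, of m n] \<open>D \<noteq> 0\<close>
    unfolding P_def D_def by simp
  also have "\<dots> = 25 * real_of_int (F (m*n)) ^ 4"
    using power_mult[of "sqrt 5" 2 2] by (simp add: F_binet power_divide)
  finally show ?thesis .
qed

lemma quartic_rhs_zero: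
  assumes "m \<noteq> 0"
  shows "quartic_rhs m 0 = 0"
proof -
  have "F m \<noteq> 0" "L m \<noteq> 0" using F_nonzero[of "2*m"] assms by (auto simp: F_double)
  then show ?thesis
    by (simp add: quartic_rhs_def F_double power_int_minus)
qed

theorem theorem1:
  fixes m n :: int
  assumes "m \<noteq> 0"
  shows "25 * gsum (\<lambda>k. real_of_int (F (m * k)) ^ 4) 1 n =
    real_of_int (F (2*m*n + m)) *
      (real_of_int (L (2*m*n + m)) + 4 * (-1) powi (m*n - 1) * real_of_int (L m))
      / real_of_int (F (2*m)) + 6 * real_of_int n + 3"
proof -
  have "gsum (\<lambda>k. real_of_int (F (m * k)) ^ 4) 1 n = quartic_rhs m n / 25 - quartic_rhs m (1 - 1) / 25"
    by (rule gsum_telescope) (simp add: quartic_rhs_diff[OF assms] flip: diff_divide_distrib)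
  then show ?thesis
    using quartic_rhs_zero[OF assms] by (simp add: quartic_rhs_def)
qed

end
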